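(* Let $\mathsf X$ be a separable Hilbert space and let $\mathbf F$ assign to every $\mu\in\mathcal P_b(\mathsf X)$ a measure $\mathbf F[\mu]\in\mathcal P_b(\mathsf X\times\mathsf X)$ with $\mathsf x_\sharp\mathbf F[\mu]=\mu$, such that (F1) there is $a\ge0$ with $\langle v,x\rangle\le a(1+|x|^2)$ for $\mathbf F[\mu]$-a.e. $(x,v)$, for every $\mu\in\mathcal P_b(\mathsf X)$; (F2) for every $R>0$ there is $\rho_R>0$ such that $\operatorname{supp}(\mu)\subset B_R(0)$ implies $\operatorname{supp}(\mathbf F[\mu])\subset B_{\rho_R}(0)$. Let $\bar\mu\in\mathcal P_b(\mathsf X)$ and $T>0$. Then the Explicit Euler scheme for $\mathbf F$ is approximately solvable at $\bar\mu$ up to time $T$.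
   Context: $\mathcal P_b(Y)$: Borel probability measures with bounded support; $\mathsf x(x,v)=x$, $\exp^\tau(x,v)=x+\tau v$, $|\Phi|_2^2=\int|v|^2d\Phi$; $W_2$ quadratic Wasserstein distance. Viewing $\mathbf F$ as the MPVF $\{\mathbf F[\mu]:\mu\in\mathcal P_b(\mathsf X)\}$ with domain $D(\mathbf F)=\mathcal P_b(\mathsf X)$: for $\tau>0$, $N=\lceil T/\tau\rceil$, $L>0$, the set $\mathscr E(\mu,\tau,T,L)$ is nonempty iff there is a sequence $(M^n,\Phi^n)_{0\le n\le N}$ with $M^0=\mu$, $\Phi^n=\mathbf F[M^n]$, $|\Phi^n|_2\le L$ ($n<N$), $M^n=(\exp^\tau)_\sharp\Phi^{n-1}$ ($n\ge1$), all $M^n\in D(\mathbf F)$. Approximate solvability at $\bar\mu$ up to $T$: there exist $\bar\tau,L>0$ and $(\bar\mu^j)_j\subset D(\mathbf F)$ with finite supports, $W_2(\bar\mu^j,\bar\mu)\to0$, and $\mathscr E(\bar\mu^j,\tau,T,L)\ne\emptyset$ for every $0<\tau<\bar\tau$ and every $j$. *)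

theory Defs
  imports "HOL-Probability.Probability"
begin

definition msupp :: "'a::metric_space measure \<Rightarrow> 'a set" where
  "msupp \<mu> = {x. \<forall>e>0. emeasure \<mu> (ball x e) > 0}"

definition Pb :: "'a::metric_space measure set" where
  "Pb = {\<mu>. sets \<mu> = sets borel \<and> prob_space \<mu> \<and> bounded (msupp \<mu>)}"

definition vel_sq :: "('a::real_normed_vector \<times> 'a) measure \<Rightarrow> ennreal" where
  "vel_sq \<Phi> = (\<integral>\<^sup>+ p. ennreal ((norm (snd p))\<^sup>2) \<partial>\<Phi>)"

definition exp_map :: "real \<Rightarrow> ('a::real_normed_vector \<times> 'a) \<Rightarrow> 'a" where
  "exp_map \<tau> p = fst p + \<tau> *\<^sub>R snd p"

definition couplings :: "'a::metric_space measure \<Rightarrow> 'a measure \<Rightarrow> ('a \<times> 'a) measure set" where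
  "couplings \<mu> \<nu> = {\<gamma>. sets \<gamma> = sets borel \<and> prob_space \<gamma> \<and>
      distr \<gamma> borel fst = \<mu> \<and> distr \<gamma> borel snd = \<nu>}"

definition W2 :: "'a::real_normed_vector measure \<Rightarrow> 'a measure \<Rightarrow> real" where
  "W2 \<mu> \<nu> = sqrt (enn2real (INF \<gamma>\<in>couplings \<mu> \<nu>.
        \<integral>\<^sup>+ p. ennreal ((norm (fst p - snd p))\<^sup>2) \<partial>\<gamma>))"

definition euler_set ::
  "('a::real_normed_vector measure \<Rightarrow> ('a \<times> 'a) measure) \<Rightarrow> 'a measure \<Rightarrow> real \<Rightarrow> real \<Rightarrow> real
     \<Rightarrow> ((nat \<Rightarrow> 'a measure) \<times> (nat \<Rightarrow> ('a \<times> 'a) measure)) set" where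
  "euler_set F \<mu> \<tau> T L = (let N = nat \<lceil>T / \<tau>\<rceil> in
     {(M, \<Phi>). M 0 = \<mu> \<and>
        (\<forall>n\<le>N. \<Phi> n = F (M n)) \<and>
        (\<forall>n<N. vel_sq (\<Phi> n) \<le> ennreal (L\<^sup>2)) \<and>
        (\<forall>n. 1 \<le> n \<and> n \<le> N \<longrightarrow> M n = distr (\<Phi> (n - 1)) borel (exp_map \<tau>)) \<and>
        (\<forall>n\<le>N. M n \<in> Pb)})"

definition approx_solvable ::
  "('a::real_normed_vector measure \<Rightarrow> ('a \<times> 'a) measure) \<Rightarrow> 'a measure \<Rightarrow> real \<Rightarrow> bool" where
  "approx_solvable F \<mu> T \<longleftrightarrow> (\<exists>\<tau>0 L (\<mu>s :: nat \<Rightarrow> 'a measure). \<tau>0 > 0 \<and> L > 0 \<and>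
      (\<forall>j. \<mu>s j \<in> Pb \<and> finite (msupp (\<mu>s j))) \<and>
      (\<lambda>j. W2 (\<mu>s j) \<mu>) \<longlonglongrightarrow> 0 \<and>
      (\<forall>\<tau> j. 0 < \<tau> \<and> \<tau> < \<tau>0 \<longrightarrow> euler_set F (\<mu>s j) \<tau> T L \<noteq> {}))"

end

theory Submission
  imports Defs
begin

(* Let q_j be simple functions converging pointwise to the identity with
   |q_j x| <= 2|x|. The push-forwards of mu0 under q_j have finite, uniformly bounded supports,
   and they converge to mu0 in W2 by dominated convergence.
   Along an Euler step x |-> x + tau v, condition (F1) gives
   1 + |x + tau v|^2 <= (1 + |x|^2)(1 + (2a + 1) tau) as long as tau |v|^2 <= 1.
   Hence after n <= T/tau + 1 steps the energy 1 + |x|^2 is at most (1 + R^2) e^((2a+1)(T+1)).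
   By (F2) the velocities then stay in a ball B_rho fixed in advance, and any tau < 1/rho^2
   keeps the induction going. *)

lemma AE_in_msupp:
  fixes M :: "'a::{metric_space, second_countable_topology} measure"
  assumes "sets M = sets borel"
  shows "AE x in M. x \<in> msupp M"
proof -
  define U where "U = {ball x e | x e. e > 0 \<and> emeasure M (ball x e) = 0}"
  have "\<And>S. S \<in> U \<Longrightarrow> open S" unfolding U_def by auto
  then obtain U' where U': "U' \<subseteq> U" "countable U'" "\<Union>U' = \<Union>U"
    using Lindelof by blast
  have "(\<Union>S\<in>U'. S) \<in> null_sets M"
  proof (rule null_sets_UN'[OF U'(2)])
    fix S assume "S \<in> U'"
    then obtain x e where "S = ball x e" "emeasure M (ball x e) = 0"
      using U'(1) unfolding U_def by auto
    then show "S \<in> null_sets M" using assms by (auto simp: null_sets_def)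
  qed
  moreover have "{x \<in> space M. x \<notin> msupp M} \<subseteq> (\<Union>S\<in>U'. S)"
  proof
    fix x assume "x \<in> {x \<in> space M. x \<notin> msupp M}"
    then obtain e where "e > 0" "emeasure M (ball x e) = 0"
      unfolding msupp_def by (auto simp: zero_less_iff_neq_zero)
    then have "x \<in> \<Union>U" unfolding U_def by (auto intro!: exI[of _ "ball x e"])
    then show "x \<in> (\<Union>S\<in>U'. S)" using U'(3) by auto
  qed
  ultimately show ?thesis by (rule AE_I')
qed

lemma AE_in_msupp_subset:
  fixes M :: "'a::{metric_space, second_countable_topology} measure"
  assumes "sets M = sets borel" "msupp M \<subseteq> A"
  shows "AE x in M. x \<in> A"
  using AE_in_msupp[OF assms(1)] by eventually_elim (use assms(2) in auto)

lemma msupp_subset_closed: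
  fixes M :: "'a::metric_space measure"
  assumes M: "sets M = sets borel" and "closed C" and AE: "AE x in M. x \<in> C"
  shows "msupp M \<subseteq> C"
proof
  fix y assume y: "y \<in> msupp M"
  show "y \<in> C"
  proof (rule ccontr)
    assume "y \<notin> C"
    then obtain e where e: "e > 0" "ball y e \<subseteq> - C"
      using \<open>closed C\<close> by (metis open_Compl open_contains_ball ComplI)
    have "emeasure M (- C) = 0"
      using AE_iff_measurable[of "- C" M "\<lambda>x. x \<in> C"] AE \<open>closed C\<close> M sets_eq_imp_space_eq[OF M]
      by auto
    moreover have "emeasure M (ball y e) \<le> emeasure M (- C)"
      using e(2) \<open>closed C\<close> M by (intro emeasure_mono) auto
    moreover have "emeasure M (ball y e) > 0" using y e(1) unfolding msupp_def by auto
    ultimately show False by simp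
  qed
qed

lemma distr_in_Pb:
  fixes f :: "'b \<Rightarrow> 'a::metric_space"
  assumes "prob_space M" "f \<in> M \<rightarrow>\<^sub>M borel" "closed C" "bounded C" "AE x in M. f x \<in> C"
  shows "distr M borel f \<in> Pb" and "msupp (distr M borel f) \<subseteq> C"
proof -
  have "AE y in distr M borel f. y \<in> C"
    using assms(2,3,5) by (subst AE_distr_iff) auto
  then show supp: "msupp (distr M borel f) \<subseteq> C"
    using assms(3) by (intro msupp_subset_closed) auto
  show "distr M borel f \<in> Pb"
    using prob_space.prob_space_distr[OF assms(1,2)] bounded_subset[OF assms(4) supp]
    unfolding Pb_def by simp
qed

(* The finiteness hypothesis is needed because enn2real maps \<infinity> to 0. *)
lemma W2_le_coupling_cost:
  assumes "\<gamma> \<in> couplings \<nu> \<mu>"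
    and "(\<integral>\<^sup>+ p. ennreal ((norm (fst p - snd p))\<^sup>2) \<partial>\<gamma>) < \<infinity>"
  shows "W2 \<nu> \<mu> \<le> sqrt (enn2real (\<integral>\<^sup>+ p. ennreal ((norm (fst p - snd p))\<^sup>2) \<partial>\<gamma>))"
  unfolding W2_def using assms by (intro real_sqrt_le_mono enn2real_mono INF_lower2[of \<gamma>]) auto

lemma W2_distr_le:
  fixes \<mu> :: "'a::{real_normed_vector, second_countable_topology} measure"
  assumes \<mu>: "sets \<mu> = sets borel" "prob_space \<mu>" and q: "q \<in> borel_measurable borel"
    and finite_cost: "(\<integral>\<^sup>+ x. ennreal ((norm (q x - x))\<^sup>2) \<partial>\<mu>) < \<infinity>"
  shows "W2 (distr \<mu> borel q) \<mu> \<le> sqrt (enn2real (\<integral>\<^sup>+ x. ennreal ((norm (q x - x))\<^sup>2) \<partial>\<mu>))"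
proof -
  have meas_\<mu>: "borel_measurable \<mu> = borel_measurable borel"
    using measurable_cong_sets[OF \<mu>(1) refl] .
  have "(\<lambda>x. (q x, x)) \<in> \<mu> \<rightarrow>\<^sub>M borel \<Otimes>\<^sub>M borel"
    using q by (intro measurable_Pair) (simp_all add: meas_\<mu>)
  then have graph: "(\<lambda>x. (q x, x)) \<in> \<mu> \<rightarrow>\<^sub>M borel"
    by (simp add: borel_prod)
  have fst_meas: "fst \<in> (borel :: ('a \<times> 'a) measure) \<rightarrow>\<^sub>M borel"
    using measurable_fst[of "borel :: 'a measure" "borel :: 'a measure"] by (simp add: borel_prod)
  have snd_meas: "snd \<in> (borel :: ('a \<times> 'a) measure) \<rightarrow>\<^sub>M borel"
    using measurable_snd[of "borel :: 'a measure" "borel :: 'a measure"] by (simp add: borel_prod)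
  define \<gamma> where "\<gamma> = distr \<mu> borel (\<lambda>x. (q x, x))"
  have "distr \<gamma> borel fst = distr \<mu> borel q"
    unfolding \<gamma>_def distr_distr[OF fst_meas graph] by (simp add: comp_def)
  moreover have "distr \<gamma> borel snd = \<mu>"
    unfolding \<gamma>_def distr_distr[OF snd_meas graph] using \<mu>(1) by (simp add: comp_def distr_id2)
  ultimately have coupling: "\<gamma> \<in> couplings (distr \<mu> borel q) \<mu>"
    unfolding couplings_def \<gamma>_def using prob_space.prob_space_distr[OF \<mu>(2) graph] by simp
  have "(\<lambda>p. ennreal ((norm (fst p - snd p))\<^sup>2)) \<in> borel_measurable (borel :: ('a \<times> 'a) measure)"
    by (intro measurable_compose[OF _ measurable_ennreal] borel_measurable_continuous_onI continuous_intros)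
  then have cost: "(\<integral>\<^sup>+ p. ennreal ((norm (fst p - snd p))\<^sup>2) \<partial>\<gamma>)
      = (\<integral>\<^sup>+ x. ennreal ((norm (q x - x))\<^sup>2) \<partial>\<mu>)"
    unfolding \<gamma>_def by (subst nn_integral_distr[OF graph]) simp_all
  show ?thesis
    using W2_le_coupling_cost[OF coupling] finite_cost unfolding cost by blast
qed

lemma nn_integral_sq_dist_tendsto_0:
  fixes \<mu> :: "'a::{real_normed_vector, second_countable_topology} measure"
  assumes sets_\<mu>: "sets \<mu> = sets borel" and prob: "prob_space \<mu>"
    and q_meas: "\<And>j. q j \<in> borel_measurable borel"
    and conv: "\<And>x. (\<lambda>j. q j x) \<longlonglongrightarrow> x" and bound: "\<And>j x. norm (q j x) \<le> 2 * norm x"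
    and AE_R: "AE x in \<mu>. norm x < R"
  shows "(\<lambda>j. \<integral>\<^sup>+ x. ennreal ((norm (q j x - x))\<^sup>2) \<partial>\<mu>) \<longlonglongrightarrow> 0"
proof -
  have cost_meas: "(\<lambda>x. ennreal ((norm (q j x - x))\<^sup>2)) \<in> borel_measurable \<mu>" for j
  proof -
    note q_meas[measurable]
    show ?thesis unfolding measurable_cong_sets[OF sets_\<mu> refl] by measurable
  qed
  have "(\<lambda>j. \<integral>\<^sup>+ x. ennreal ((norm (q j x - x))\<^sup>2) \<partial>\<mu>) \<longlonglongrightarrow> (\<integral>\<^sup>+ x. 0 \<partial>\<mu>)"
  proof (rule nn_integral_dominated_convergence[where w="\<lambda>_. ennreal ((3 * R)\<^sup>2)", OF cost_meas])
    show "AE x in \<mu>. ennreal ((norm (q j x - x))\<^sup>2) \<le> ennreal ((3 * R)\<^sup>2)" for j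
      using AE_R
    proof eventually_elim
      case (elim x)
      have "norm (q j x - x) \<le> 3 * R"
        using norm_triangle_ineq4[of "q j x" x] bound[of j x] elim by linarith
      then show ?case by (intro ennreal_leI power_mono) auto
    qed
    show "(\<integral>\<^sup>+ x. ennreal ((3 * R)\<^sup>2) \<partial>\<mu>) < \<infinity>"
      using prob_space.emeasure_space_1[OF prob] by simp
    show "AE x in \<mu>. (\<lambda>j. ennreal ((norm (q j x - x))\<^sup>2)) \<longlonglongrightarrow> 0"
      using conv by (intro AE_I2) (auto intro!: tendsto_eq_intros)
  qed simp_all
  then show ?thesis by simp
qed

lemma W2_distr_tendsto_0:
  fixes \<mu> :: "'a::{real_normed_vector, second_countable_topology} measure"
  assumes sets_\<mu>: "sets \<mu> = sets borel" and prob: "prob_space \<mu>"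
    and q_meas: "\<And>j. q j \<in> borel_measurable borel"
    and cost_lim: "(\<lambda>j. \<integral>\<^sup>+ x. ennreal ((norm (q j x - x))\<^sup>2) \<partial>\<mu>) \<longlonglongrightarrow> 0"
  shows "(\<lambda>j. W2 (distr \<mu> borel (q j)) \<mu>) \<longlonglongrightarrow> 0"
proof -
  define cost where "cost j = (\<integral>\<^sup>+ x. ennreal ((norm (q j x - x))\<^sup>2) \<partial>\<mu>)" for j
  have "eventually (\<lambda>j. cost j < \<infinity>) sequentially"
    using order_tendstoD(2)[OF cost_lim, of \<infinity>] unfolding cost_def by simp
  then have W2_le: "eventually (\<lambda>j. W2 (distr \<mu> borel (q j)) \<mu> \<le> sqrt (enn2real (cost j))) sequentially"
  proof eventually_elim
    case (elim j)
    then show ?case unfolding cost_def by (rule W2_distr_le[OF sets_\<mu> prob q_meas])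
  qed
  have W2_nonneg: "eventually (\<lambda>j. 0 \<le> W2 (distr \<mu> borel (q j)) \<mu>) sequentially"
    by (simp add: W2_def)
  have "(\<lambda>j. sqrt (enn2real (cost j))) \<longlonglongrightarrow> 0"
    using tendsto_real_sqrt[OF tendsto_enn2real[OF cost_lim[unfolded ennreal_0[symmetric]]]]
    unfolding cost_def by simp
  then show ?thesis
    by (rule tendsto_sandwich[OF W2_nonneg W2_le tendsto_const])
qed

lemma finite_support_approximation:
  fixes \<mu> :: "'a::{real_normed_vector, second_countable_topology} measure"
  assumes \<mu>: "\<mu> \<in> Pb" and supp: "msupp \<mu> \<subseteq> ball 0 R"
  obtains \<mu>s where "\<And>j. \<mu>s j \<in> Pb" "\<And>j. finite (msupp (\<mu>s j))"
    "\<And>j. msupp (\<mu>s j) \<subseteq> cball 0 (2 * R)" "(\<lambda>j. W2 (\<mu>s j) \<mu>) \<longlonglongrightarrow> 0"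
proof -
  have sets_\<mu>: "sets \<mu> = sets borel" and prob: "prob_space \<mu>"
    using \<mu> unfolding Pb_def by auto
  obtain q :: "nat \<Rightarrow> 'a \<Rightarrow> 'a" where simple: "\<And>j. simple_function borel (q j)"
    and conv: "\<And>x. (\<lambda>j. q j x) \<longlonglongrightarrow> x" and bound: "\<And>j x. norm (q j x) \<le> 2 * norm x"
    using borel_measurable_implies_sequence_metric[of "\<lambda>x. x" borel "0 :: 'a"]
    by (simp add: dist_norm) blast
  have q_meas: "q j \<in> borel_measurable borel" for j
    by (rule borel_measurable_simple_function[OF simple])
  have AE_R: "AE x in \<mu>. norm x < R"
    using AE_in_msupp_subset[OF sets_\<mu> supp] by simp
  show ?thesis
  proof
    fix j
    let ?S = "q j ` UNIV \<inter> cball 0 (2 * R)"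
    have "AE x in \<mu>. q j x \<in> ?S"
      using AE_R
    proof eventually_elim
      case (elim x)
      then have "norm (q j x) \<le> 2 * R"
        using bound[of j x] by linarith
      then show ?case by simp
    qed
    moreover have "q j \<in> \<mu> \<rightarrow>\<^sub>M borel"
      unfolding measurable_cong_sets[OF sets_\<mu> refl] by (rule q_meas)
    moreover have finite_range: "finite (q j ` UNIV)"
      using simple_functionD(1)[OF simple] by simp
    then have "closed ?S" "bounded ?S"
      by (simp_all add: closed_Int finite_imp_closed bounded_Int finite_imp_bounded)
    ultimately have Pb_j: "distr \<mu> borel (q j) \<in> Pb"
      and supp_j: "msupp (distr \<mu> borel (q j)) \<subseteq> ?S"
      using distr_in_Pb[OF prob] by blast+
    show "distr \<mu> borel (q j) \<in> Pb"
      by (rule Pb_j)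
    show "msupp (distr \<mu> borel (q j)) \<subseteq> cball 0 (2 * R)"
      using supp_j by blast
    show "finite (msupp (distr \<mu> borel (q j)))"
      using supp_j finite_range by (meson finite_Int finite_subset)
  next
    show "(\<lambda>j. W2 (distr \<mu> borel (q j)) \<mu>) \<longlonglongrightarrow> 0"
      using W2_distr_tendsto_0[OF sets_\<mu> prob q_meas
          nn_integral_sq_dist_tendsto_0[OF sets_\<mu> prob q_meas conv bound AE_R]] .
  qed
qed

lemma le_one_plus_power2:
  fixes x :: real
  shows "x \<le> 1 + x\<^sup>2"
proof (cases "x \<le> 0")
  case True
  then show ?thesis using zero_le_power2[of x] by linarith
next
  case False
  then show ?thesis using zero_le_power2[of "x - 1"] unfolding power2_diff by simp
qed

lemma closed_energy_sublevel: "closed {x::'a::real_normed_vector. 1 + (norm x)\<^sup>2 \<le> c}"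
  by (intro closed_Collect_le continuous_intros)

lemma energy_sublevel_subset_cball: "{x::'a::real_normed_vector. 1 + (norm x)\<^sup>2 \<le> c} \<subseteq> cball 0 c"
proof
  fix x :: 'a assume "x \<in> {x. 1 + (norm x)\<^sup>2 \<le> c}"
  then show "x \<in> cball 0 c" using le_one_plus_power2[of "norm x"] by simp
qed

lemma energy_exp_step_le:
  fixes x v :: "'a::real_inner"
  assumes "inner v x \<le> a * (1 + (norm x)\<^sup>2)" and "\<tau> * (norm v)\<^sup>2 \<le> 1" and "0 \<le> \<tau>"
  shows "1 + (norm (x + \<tau> *\<^sub>R v))\<^sup>2 \<le> (1 + (norm x)\<^sup>2) * (1 + (2 * a + 1) * \<tau>)"
proof -
  have "(norm (x + \<tau> *\<^sub>R v))\<^sup>2 = (norm x)\<^sup>2 + 2 * \<tau> * inner v x + \<tau> * (\<tau> * (norm v)\<^sup>2)"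
    unfolding power2_norm_eq_inner
    by (simp add: inner_commute[of x v] algebra_simps)
  also have "\<dots> \<le> (norm x)\<^sup>2 + 2 * \<tau> * (a * (1 + (norm x)\<^sup>2)) + \<tau>"
    using assms by (intro add_mono mult_left_mono mult_right_le_one_le) auto
  also have "\<dots> \<le> (1 + (norm x)\<^sup>2) * (1 + (2 * a + 1) * \<tau>) - 1"
    using assms(3) by (simp add: algebra_simps)
  finally show ?thesis by simp
qed

lemma pow_one_plus_le_exp:
  fixes x :: real
  assumes "0 \<le> x"
  shows "(1 + x) ^ n \<le> exp (x * n)"
proof -
  have "(1 + x) ^ n \<le> exp x ^ n"
    using assms by (intro power_mono) auto
  then show ?thesis by (simp add: exp_of_nat_mult[symmetric] mult.commute)
qed

lemma step_time_le_horizon: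
  fixes \<tau> T :: real
  assumes "0 < \<tau>" "\<tau> \<le> 1" "0 \<le> T" "n \<le> nat \<lceil>T / \<tau>\<rceil>"
  shows "n * \<tau> \<le> T + 1"
proof -
  have "0 \<le> T / \<tau>"
    using assms(1,3) by simp
  then have "int n \<le> \<lceil>T / \<tau>\<rceil>"
    using assms(4) le_nat_iff[of "\<lceil>T / \<tau>\<rceil>" n] by simp
  then have "real n < T / \<tau> + 1"
    using ceiling_correct[of "T / \<tau>"] by linarith
  then have "n * \<tau> < T + \<tau>"
    using assms(1) by (simp add: field_simps)
  then show ?thesis using assms(2) by simp
qed

lemma vel_sq_le:
  assumes "prob_space \<Phi>" "AE p in \<Phi>. norm (snd p) \<le> L"
  shows "vel_sq \<Phi> \<le> ennreal (L\<^sup>2)"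
proof -
  have "vel_sq \<Phi> \<le> (\<integral>\<^sup>+ p. ennreal (L\<^sup>2) \<partial>\<Phi>)"
    unfolding vel_sq_def using assms(2)
    by (intro nn_integral_mono_AE) (auto elim!: eventually_mono intro!: ennreal_leI power_mono)
  also have "\<dots> = ennreal (L\<^sup>2)"
    using prob_space.emeasure_space_1[OF assms(1)] by simp
  finally show ?thesis .
qed

definition euler_seq ::
  "('a::real_normed_vector measure \<Rightarrow> ('a \<times> 'a) measure) \<Rightarrow> real \<Rightarrow> 'a measure \<Rightarrow> nat \<Rightarrow> 'a measure"
  where "euler_seq F \<tau> \<mu> = rec_nat \<mu> (\<lambda>_ M. distr (F M) borel (exp_map \<tau>))"

lemma euler_seq_0 [simp]: "euler_seq F \<tau> \<mu> 0 = \<mu>"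
  and euler_seq_Suc [simp]: "euler_seq F \<tau> \<mu> (Suc n) = distr (F (euler_seq F \<tau> \<mu> n)) borel (exp_map \<tau>)"
  by (simp_all add: euler_seq_def)

lemma euler_seq_in_euler_set:
  assumes "\<And>n. n \<le> nat \<lceil>T / \<tau>\<rceil> \<Longrightarrow> euler_seq F \<tau> \<mu> n \<in> Pb"
    and "\<And>n. n < nat \<lceil>T / \<tau>\<rceil> \<Longrightarrow> vel_sq (F (euler_seq F \<tau> \<mu> n)) \<le> ennreal (L\<^sup>2)"
  shows "(euler_seq F \<tau> \<mu>, \<lambda>n. F (euler_seq F \<tau> \<mu> n)) \<in> euler_set F \<mu> \<tau> T L"
proof -
  have "euler_seq F \<tau> \<mu> n = distr (F (euler_seq F \<tau> \<mu> (n - 1))) borel (exp_map \<tau>)" if "1 \<le> n" for n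
    using that by (cases n) auto
  then show ?thesis unfolding euler_set_def Let_def using assms by auto
qed

locale linear_growth_field =
  fixes F :: "'a::{real_inner, second_countable_topology} measure \<Rightarrow> ('a \<times> 'a) measure"
    and a :: real
  assumes F_Pb: "\<mu> \<in> Pb \<Longrightarrow> F \<mu> \<in> Pb"
    and F_marg: "\<mu> \<in> Pb \<Longrightarrow> distr (F \<mu>) borel fst = \<mu>"
    and a_nonneg: "0 \<le> a"
    and F_growth: "\<mu> \<in> Pb \<Longrightarrow> AE p in F \<mu>. inner (snd p) (fst p) \<le> a * (1 + (norm (fst p))\<^sup>2)"
begin

lemma euler_step_energy:
  assumes \<mu>: "\<mu> \<in> Pb" and energy: "AE x in \<mu>. 1 + (norm x)\<^sup>2 \<le> c"
    and vel: "AE p in F \<mu>. \<tau> * (norm (snd p))\<^sup>2 \<le> 1" and "0 \<le> \<tau>"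
  shows "distr (F \<mu>) borel (exp_map \<tau>) \<in> Pb"
    and "AE x in distr (F \<mu>) borel (exp_map \<tau>). 1 + (norm x)\<^sup>2 \<le> c * (1 + (2 * a + 1) * \<tau>)"
proof -
  have sets_F: "sets (F \<mu>) = sets borel" and prob: "prob_space (F \<mu>)"
    using F_Pb[OF \<mu>] unfolding Pb_def by auto
  have fst_meas: "fst \<in> F \<mu> \<rightarrow>\<^sub>M borel" and exp_meas: "exp_map \<tau> \<in> F \<mu> \<rightarrow>\<^sub>M borel"
    unfolding measurable_cong_sets[OF sets_F refl] exp_map_def[abs_def]
    by (simp_all add: borel_prod[symmetric])
  have "AE x in distr (F \<mu>) borel fst. 1 + (norm x)\<^sup>2 \<le> c"
    using energy by (simp only: F_marg[OF \<mu>])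
  then have "AE p in F \<mu>. 1 + (norm (fst p))\<^sup>2 \<le> c"
    by (subst (asm) AE_distr_iff[OF fst_meas]) auto
  then have AE_step: "AE p in F \<mu>. 1 + (norm (exp_map \<tau> p))\<^sup>2 \<le> c * (1 + (2 * a + 1) * \<tau>)"
    using F_growth[OF \<mu>] vel
  proof eventually_elim
    case (elim p)
    have "1 + (norm (exp_map \<tau> p))\<^sup>2 \<le> (1 + (norm (fst p))\<^sup>2) * (1 + (2 * a + 1) * \<tau>)"
      unfolding exp_map_def using elim(2,3) \<open>0 \<le> \<tau>\<close> by (rule energy_exp_step_le)
    also have "\<dots> \<le> c * (1 + (2 * a + 1) * \<tau>)"
      using elim(1) a_nonneg \<open>0 \<le> \<tau>\<close> by (intro mult_right_mono) auto
    finally show ?case .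
  qed
  then have "AE p in F \<mu>. exp_map \<tau> p \<in> {x. 1 + (norm x)\<^sup>2 \<le> c * (1 + (2 * a + 1) * \<tau>)}"
    by simp
  then show "distr (F \<mu>) borel (exp_map \<tau>) \<in> Pb"
    by (rule distr_in_Pb(1)[OF prob exp_meas closed_energy_sublevel
          bounded_subset[OF bounded_cball energy_sublevel_subset_cball]])
  show "AE x in distr (F \<mu>) borel (exp_map \<tau>). 1 + (norm x)\<^sup>2 \<le> c * (1 + (2 * a + 1) * \<tau>)"
    using AE_step by (subst AE_distr_iff[OF exp_meas]) auto
qed

lemma AE_velocity_less:
  assumes \<rho>: "\<forall>\<mu>\<in>Pb. msupp \<mu> \<subseteq> ball 0 Rs \<longrightarrow> msupp (F \<mu>) \<subseteq> ball 0 \<rho>"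
    and \<mu>: "\<mu> \<in> Pb" and energy: "AE x in \<mu>. 1 + (norm x)\<^sup>2 \<le> c" and "c < Rs"
  shows "AE p in F \<mu>. norm (snd p) < \<rho>"
proof -
  have "msupp \<mu> \<subseteq> {x. 1 + (norm x)\<^sup>2 \<le> c}"
    using \<mu> energy unfolding Pb_def by (intro msupp_subset_closed closed_energy_sublevel) auto
  also have "\<dots> \<subseteq> cball 0 c"
    by (rule energy_sublevel_subset_cball)
  also have "\<dots> \<subseteq> ball 0 Rs"
    using \<open>c < Rs\<close> by auto
  finally have "msupp (F \<mu>) \<subseteq> ball 0 \<rho>"
    using \<rho> \<mu> by blast
  then have "AE p in F \<mu>. p \<in> ball 0 \<rho>"
    using F_Pb[OF \<mu>] unfolding Pb_def by (intro AE_in_msupp_subset) auto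
  then show ?thesis
    by eventually_elim (auto intro: le_less_trans[OF norm_snd_le])
qed

lemma euler_seq_bounded:
  assumes \<rho>: "\<forall>\<mu>\<in>Pb. msupp \<mu> \<subseteq> ball 0 Rs \<longrightarrow> msupp (F \<mu>) \<subseteq> ball 0 \<rho>"
    and Rs: "(1 + R\<^sup>2) * exp ((2 * a + 1) * (T + 1)) < Rs"
    and \<nu>: "\<nu> \<in> Pb" "msupp \<nu> \<subseteq> cball 0 R"
    and \<tau>: "0 < \<tau>" "\<tau> \<le> 1" "\<tau> * \<rho>\<^sup>2 \<le> 1" and T: "0 \<le> T"
    and n: "n \<le> nat \<lceil>T / \<tau>\<rceil>"
  shows "euler_seq F \<tau> \<nu> n \<in> Pb" and "AE p in F (euler_seq F \<tau> \<nu> n). norm (snd p) < \<rho>"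
proof -
  define b where "b = 2 * a + 1"
  let ?M = "euler_seq F \<tau> \<nu>"
  have energy_bound: "(1 + R\<^sup>2) * (1 + b * \<tau>) ^ k < Rs" if "k \<le> nat \<lceil>T / \<tau>\<rceil>" for k
  proof -
    have "(1 + b * \<tau>) ^ k \<le> exp (b * \<tau> * k)"
      using a_nonneg \<tau>(1) unfolding b_def by (intro pow_one_plus_le_exp) simp
    also have "\<dots> \<le> exp (b * (T + 1))"
      using step_time_le_horizon[OF \<tau>(1,2) T that] a_nonneg unfolding b_def
      by (simp add: mult.assoc mult.commute[of \<tau>] mult_left_mono)
    finally have "(1 + R\<^sup>2) * (1 + b * \<tau>) ^ k \<le> (1 + R\<^sup>2) * exp (b * (T + 1))"
      by (intro mult_left_mono) auto
    then show ?thesis using Rs unfolding b_def by simp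
  qed
  have invariant: "?M k \<in> Pb \<and> (AE x in ?M k. 1 + (norm x)\<^sup>2 \<le> (1 + R\<^sup>2) * (1 + b * \<tau>) ^ k)"
    if "k \<le> nat \<lceil>T / \<tau>\<rceil>" for k
    using that
  proof (induction k)
    case 0
    have "AE x in \<nu>. x \<in> cball 0 R"
      using \<nu> unfolding Pb_def by (intro AE_in_msupp_subset) auto
    then have "AE x in \<nu>. 1 + (norm x)\<^sup>2 \<le> 1 + R\<^sup>2"
      by eventually_elim (simp add: power_mono)
    then show ?case unfolding euler_seq_0 using \<nu>(1) by simp
  next
    case (Suc k)
    define c where "c = (1 + R\<^sup>2) * (1 + b * \<tau>) ^ k"
    have \<mu>: "?M k \<in> Pb" and energy: "AE x in ?M k. 1 + (norm x)\<^sup>2 \<le> c"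
      using Suc unfolding c_def by auto
    have "AE p in F (?M k). norm (snd p) < \<rho>"
      using AE_velocity_less[OF \<rho> \<mu> energy] energy_bound[of k] Suc(2) unfolding c_def by simp
    then have "AE p in F (?M k). \<tau> * (norm (snd p))\<^sup>2 \<le> 1"
    proof eventually_elim
      case (elim p)
      then have "\<tau> * (norm (snd p))\<^sup>2 \<le> \<tau> * \<rho>\<^sup>2"
        using \<tau>(1) by (intro mult_left_mono power_mono) auto
      then show ?case using \<tau>(3) by simp
    qed
    from euler_step_energy[OF \<mu> energy this less_imp_le[OF \<tau>(1)]]
    show ?case unfolding euler_seq_Suc c_def b_def power_Suc2 mult.assoc ..
  qed
  show "?M n \<in> Pb"
    using invariant[OF n] ..
  show "AE p in F (?M n). norm (snd p) < \<rho>"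
    using invariant[OF n] AE_velocity_less[OF \<rho>] energy_bound[OF n] by blast
qed

lemma euler_set_nonempty:
  assumes \<rho>: "\<forall>\<mu>\<in>Pb. msupp \<mu> \<subseteq> ball 0 Rs \<longrightarrow> msupp (F \<mu>) \<subseteq> ball 0 \<rho>"
    and Rs: "(1 + R\<^sup>2) * exp ((2 * a + 1) * (T + 1)) < Rs"
    and \<nu>: "\<nu> \<in> Pb" "msupp \<nu> \<subseteq> cball 0 R"
    and \<tau>: "0 < \<tau>" "\<tau> \<le> 1" "\<tau> * \<rho>\<^sup>2 \<le> 1" and T: "0 \<le> T"
  shows "euler_set F \<nu> \<tau> T \<rho> \<noteq> {}"
proof -
  note bounded = euler_seq_bounded[OF \<rho> Rs \<nu> \<tau> T]
  have "(euler_seq F \<tau> \<nu>, \<lambda>n. F (euler_seq F \<tau> \<nu> n)) \<in> euler_set F \<nu> \<tau> T \<rho>"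
  proof (rule euler_seq_in_euler_set)
    show "euler_seq F \<tau> \<nu> n \<in> Pb" if "n \<le> nat \<lceil>T / \<tau>\<rceil>" for n
      using bounded(1)[OF that] .
    show "vel_sq (F (euler_seq F \<tau> \<nu> n)) \<le> ennreal (\<rho>\<^sup>2)" if "n < nat \<lceil>T / \<tau>\<rceil>" for n
    proof (rule vel_sq_le)
      have n: "n \<le> nat \<lceil>T / \<tau>\<rceil>" using that by simp
      show "prob_space (F (euler_seq F \<tau> \<nu> n))"
        using F_Pb[OF bounded(1)[OF n]] unfolding Pb_def by blast
      show "AE p in F (euler_seq F \<tau> \<nu> n). norm (snd p) \<le> \<rho>"
        using bounded(2)[OF n] by eventually_elim simp
    qed
  qed
  then show ?thesis by blast
qed

end

theorem lemma6p12:
  fixes F :: "'a::{real_inner, complete_space, second_countable_topology} measure \<Rightarrow> ('a \<times> 'a) measure"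
    and \<mu>0 :: "'a measure" and T :: real
  assumes F_Pb: "\<And>\<mu>. \<mu> \<in> Pb \<Longrightarrow> F \<mu> \<in> Pb"
    and F_marg: "\<And>\<mu>. \<mu> \<in> Pb \<Longrightarrow> distr (F \<mu>) borel fst = \<mu>"
    and F1: "\<exists>a\<ge>0. \<forall>\<mu>\<in>Pb. AE p in F \<mu>. inner (snd p) (fst p) \<le> a * (1 + (norm (fst p))\<^sup>2)"
    and F2: "\<And>R. R > 0 \<Longrightarrow> \<exists>\<rho>>0. \<forall>\<mu>\<in>Pb. msupp \<mu> \<subseteq> ball 0 R \<longrightarrow> msupp (F \<mu>) \<subseteq> ball 0 \<rho>"
    and mu0: "\<mu>0 \<in> Pb"
    and T: "T > 0"
  shows "approx_solvable F \<mu>0 T"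
proof -
  obtain a where "0 \<le> a" and growth: "\<forall>\<mu>\<in>Pb. AE p in F \<mu>. inner (snd p) (fst p) \<le> a * (1 + (norm (fst p))\<^sup>2)"
    using F1 by blast
  interpret linear_growth_field F a
    using F_Pb F_marg \<open>0 \<le> a\<close> growth by unfold_locales auto
  obtain R where "R > 0" "msupp \<mu>0 \<subseteq> ball 0 R"
    using mu0 bounded_subset_ballD unfolding Pb_def by blast
  then obtain \<mu>s where \<mu>s: "\<And>j. \<mu>s j \<in> Pb" "\<And>j. finite (msupp (\<mu>s j))"
    "\<And>j. msupp (\<mu>s j) \<subseteq> cball 0 (2 * R)" "(\<lambda>j. W2 (\<mu>s j) \<mu>0) \<longlonglongrightarrow> 0"
    using finite_support_approximation[OF mu0] by blast
  define Rs where "Rs = (1 + (2 * R)\<^sup>2) * exp ((2 * a + 1) * (T + 1)) + 1"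
  have "Rs > 0" unfolding Rs_def by (simp add: add_pos_nonneg)
  then obtain \<rho> where "\<rho> > 0" and \<rho>: "\<forall>\<mu>\<in>Pb. msupp \<mu> \<subseteq> ball 0 Rs \<longrightarrow> msupp (F \<mu>) \<subseteq> ball 0 \<rho>"
    using F2 by blast
  define \<tau>0 where "\<tau>0 = min 1 (1 / \<rho>\<^sup>2)"
  have "euler_set F (\<mu>s j) \<tau> T \<rho> \<noteq> {}" if "0 < \<tau>" "\<tau> < \<tau>0" for \<tau> j
  proof (rule euler_set_nonempty[where R = "2 * R"])
    show "\<tau> * \<rho>\<^sup>2 \<le> 1"
      using that \<open>\<rho> > 0\<close> unfolding \<tau>0_def by (simp add: field_simps)
  qed (use that \<rho> \<mu>s T in \<open>auto simp: Rs_def \<tau>0_def\<close>)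
  moreover have "\<tau>0 > 0"
    using \<open>\<rho> > 0\<close> unfolding \<tau>0_def by simp
  ultimately show ?thesis
    unfolding approx_solvable_def using \<open>\<rho> > 0\<close> \<mu>s by blast
qed

end
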